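(* Assume (R). For $n\ge k\ge0$, $$a_{n,k}:=\frac{d^k}{dx^k}A^\star_{n,2k}(x)\Big|_{x=1}=(-1)^nk!\sum_{\nu=0}^{k}\binom{2k-\nu}{k}\binom{n}{\nu}\alpha_{n-\nu}.$$ For $n\ge2$ and $0\le k\le n-2$, $$a_{n,k+2}=(4k+6)\,a_{n,k+1}+n(n-1)\,a_{n-2,k}.$$ For odd $n\ge1$, $A_n(x)=(2x-1)F_n(x(x-1))$ and $\hat f_{n,k}=(-1)^ka_{n,k}$ for $0\le k\le\lfloor n/2\rfloor$.
   Context: Let $(\alpha_n)_{n\ge0}$ be an arbitrary sequence of complex numbers with Appell polynomials $A_n(x)=\sum_{\nu=0}^{n}\binom{n}{\nu}\alpha_{n-\nu}x^\nu$; property (R) means $A_n(1-x)=(-1)^nA_n(x)$ for all $n\ge0$. For $n\ge0,k\in\mathbb Z$ let $A^\star_{n,k}(x)=x^kA_n(x^{-1})$. Let $d_n=\lfloor n/2\rfloor$, $\delta_n=1$ if $n$ odd, $0$ otherwise. Under (R), for each $n$ there is a unique polynomial $F_n(u)=\sum_{k\ge0}f_{n,k}u^k$ of degree at most $d_n$ with $A_n(x)=(2x-1)^{\delta_n}F_n(x(x-1))$; set $\hat f_{n,k}=k!\,f_{n,k}$. *)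

theory Defs
  imports "HOL-Analysis.Analysis" "HOL-Computational_Algebra.Polynomial"
begin

definition appellA :: "(nat \<Rightarrow> complex) \<Rightarrow> nat \<Rightarrow> complex \<Rightarrow> complex" where
  "appellA \<alpha> n x = (\<Sum>\<nu>=0..n. of_nat (n choose \<nu>) * \<alpha> (n - \<nu>) * x ^ \<nu>)"

definition propR :: "(nat \<Rightarrow> complex) \<Rightarrow> bool" where
  "propR \<alpha> \<longleftrightarrow> (\<forall>n x. appellA \<alpha> n (1 - x) = (-1) ^ n * appellA \<alpha> n x)"

definition Astar :: "(nat \<Rightarrow> complex) \<Rightarrow> nat \<Rightarrow> int \<Rightarrow> complex \<Rightarrow> complex" where
  "Astar \<alpha> n k x = x powi k * appellA \<alpha> n (inverse x)"

definition aCoef :: "(nat \<Rightarrow> complex) \<Rightarrow> nat \<Rightarrow> nat \<Rightarrow> complex" where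
  "aCoef \<alpha> n k = (deriv ^^ k) (Astar \<alpha> n (2 * int k)) 1"

definition delta :: "nat \<Rightarrow> nat" where
  "delta n = (if odd n then 1 else 0)"

definition Fpoly :: "(nat \<Rightarrow> complex) \<Rightarrow> nat \<Rightarrow> complex poly" where
  "Fpoly \<alpha> n = (THE p. degree p \<le> n div 2 \<and>
      (\<forall>x. appellA \<alpha> n x = (2 * x - 1) ^ delta n * poly p (x * (x - 1))))"

definition fhat :: "(nat \<Rightarrow> complex) \<Rightarrow> nat \<Rightarrow> nat \<Rightarrow> complex" where
  "fhat \<alpha> n k = fact k * coeff (Fpoly \<alpha> n) k"

end

theory Submission
  imports Defs "HOL-Complex_Analysis.Complex_Analysis"
begin

(*
  Under (R), A_n(1/x) = (-1)^n A_n(1 - 1/x), hence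
    A*_{n,2k}(x) = (-1)^n * sum_v C(n,v) alpha_{n-v} (x - 1)^v x^(2k-v).
  In the k-th derivative at x = 1 (Leibniz rule) only the terms in which (x - 1)^v is
  differentiated exactly v times survive, which gives the closed form with weights
  k! C(2k-v,k) = (2k-v)!/(k-v)!.  These weights satisfy
    w(k+2,v) = (4k+6) w(k+1,v) + v(v-1) w(k,v-2),
  and v(v-1) C(n,v) = n(n-1) C(n-2,v-2) turns the last term into a_{n-2,k}.

  For odd n, (R) makes A_n antisymmetric under x -> 1 - x, so A_n = (2x - 1) R with R
  symmetric, and a symmetric polynomial is a polynomial in x(x - 1).  Substituting 1/x,
    A*_{n,2k}(x) = sum_j f_j (-1)^j (x - 1)^j (2 x^(2k-2j-1) - x^(2k-2j)),
  and the k-th derivative at 1 of the j-th term vanishes for j < k because the rising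
  factorials satisfy (m+1)^(m) = 2 m^(m); for j = k it is k!.
*)

lemma higher_deriv_power_int:
  fixes x :: complex
  assumes "x \<noteq> 0"
  shows "(deriv ^^ j) (\<lambda>w. w powi m) x = pochhammer (of_int m - of_nat j + 1) j * x powi (m - int j)"
  using assms
proof (induction j arbitrary: m x)
  case 0
  then show ?case by simp
next
  case (Suc j m x)
  have "eventually (\<lambda>w. w \<in> -{0}) (nhds x)"
    using Suc.prems by (intro eventually_nhds_in_open) auto
  then have "eventually (\<lambda>w. deriv (\<lambda>w. w powi m) w = of_int m * w powi (m - 1)) (nhds x)"
    by eventually_elim (auto intro!: DERIV_imp_deriv derivative_eq_intros)
  then have "(deriv ^^ Suc j) (\<lambda>w. w powi m) x = (deriv ^^ j) (\<lambda>w. of_int m * w powi (m - 1)) x"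
    unfolding funpow_Suc_right o_apply by (rule higher_deriv_cong_ev) simp
  also have "\<dots> = of_int m * (deriv ^^ j) (\<lambda>w. w powi (m - 1)) x"
    using Suc.prems by (intro higher_deriv_cmult[where A="-{0}"]) (auto intro!: holomorphic_intros)
  also have "\<dots> = pochhammer (of_int m - of_nat (Suc j) + 1) (Suc j) * x powi (m - int (Suc j))"
    using Suc.IH[OF Suc.prems, of "m - 1"] by (simp add: pochhammer_rec' algebra_simps)
  finally show ?case .
qed

lemma higher_deriv_sum:
  fixes f :: "'i \<Rightarrow> complex \<Rightarrow> complex"
  assumes "finite I" "\<And>i. i \<in> I \<Longrightarrow> f i holomorphic_on S" "open S" "z \<in> S"
  shows "(deriv ^^ n) (\<lambda>w. \<Sum>i\<in>I. f i w) z = (\<Sum>i\<in>I. (deriv ^^ n) (f i) z)"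
  using assms(1,2)
proof (induction I rule: finite_induct)
  case (insert a I)
  then have "(deriv ^^ n) (\<lambda>w. f a w + (\<Sum>i\<in>I. f i w)) z
      = (deriv ^^ n) (f a) z + (deriv ^^ n) (\<lambda>w. \<Sum>i\<in>I. f i w) z"
    using assms(3,4) by (intro higher_deriv_add[where S=S]) (auto intro!: holomorphic_on_sum)
  with insert show ?case by simp
qed simp

lemma higher_deriv_power_mult_center:
  assumes "f holomorphic_on S" "open S" "z \<in> S"
  shows "(deriv ^^ k) (\<lambda>w. (w - z) ^ v * f w) z = of_nat (k choose v) * fact v * (deriv ^^ (k - v)) f z"
proof -
  have "(deriv ^^ k) (\<lambda>w. (w - z) ^ v * f w) z
      = (\<Sum>i = 0..k. of_nat (k choose i) * (deriv ^^ i) (\<lambda>w. (w - z) ^ v) z * (deriv ^^ (k - i)) f z)"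
    using assms by (intro higher_deriv_mult[where S=S]) (auto intro!: holomorphic_intros)
  also have "\<dots> = (\<Sum>i = 0..k. if i = v then of_nat (k choose v) * fact v * (deriv ^^ (k - v)) f z else 0)"
  proof (intro sum.cong refl)
    fix i
    have "(deriv ^^ i) (\<lambda>w. (w - z) ^ v) z = (if i = v then fact v else 0)"
      by (cases "i \<le> v")
         (auto simp: higher_deriv_power pochhammer_fact pochhammer_0_left Suc_diff_le)
    then show "of_nat (k choose i) * (deriv ^^ i) (\<lambda>w. (w - z) ^ v) z * (deriv ^^ (k - i)) f z
        = (if i = v then of_nat (k choose v) * fact v * (deriv ^^ (k - v)) f z else 0)"
      by simp
  qed
  also have "\<dots> = of_nat (k choose v) * fact v * (deriv ^^ (k - v)) f z"
    by (auto simp: binomial_eq_0)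
  finally show ?thesis .
qed

lemma higher_deriv_at_1_power_powi_sum:
  fixes f :: "complex \<Rightarrow> complex"
  assumes "\<forall>\<^sub>F x in nhds 1. f x = (\<Sum>i\<in>I. c i * ((x - 1) ^ v i * x powi m i))"
    and "finite I"
  shows "(deriv ^^ k) f 1 = (\<Sum>i\<in>I. c i * (of_nat (k choose v i) * fact (v i)
           * pochhammer (of_int (m i) - of_nat (k - v i) + 1) (k - v i)))"
proof -
  have hol: "(\<lambda>x. x powi m i) holomorphic_on -{0}" for i
    by (auto intro!: holomorphic_intros)
  have "(deriv ^^ k) f 1 = (deriv ^^ k) (\<lambda>x. \<Sum>i\<in>I. c i * ((x - 1) ^ v i * x powi m i)) 1"
    using assms(1) by (rule higher_deriv_cong_ev) simp
  also have "\<dots> = (\<Sum>i\<in>I. (deriv ^^ k) (\<lambda>x. c i * ((x - 1) ^ v i * x powi m i)) 1)"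
    using assms(2) by (intro higher_deriv_sum[where S="-{0}"]) (auto intro!: holomorphic_intros)
  also have "\<dots> = (\<Sum>i\<in>I. c i * (deriv ^^ k) (\<lambda>x. (x - 1) ^ v i * x powi m i) 1)"
    by (intro sum.cong refl higher_deriv_cmult[where A="-{0}"]) (auto intro!: holomorphic_intros)
  also have "\<dots> = (\<Sum>i\<in>I. c i * (of_nat (k choose v i) * fact (v i)
           * pochhammer (of_int (m i) - of_nat (k - v i) + 1) (k - v i)))"
  proof (intro sum.cong refl)
    fix i
    have "(deriv ^^ k) (\<lambda>x::complex. (x - 1) ^ v i * x powi m i) 1
        = of_nat (k choose v i) * fact (v i) * (deriv ^^ (k - v i)) (\<lambda>x. x powi m i) 1"
      using hol by (rule higher_deriv_power_mult_center) auto
    then show "c i * (deriv ^^ k) (\<lambda>x. (x - 1) ^ v i * x powi m i) 1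
        = c i * (of_nat (k choose v i) * fact (v i)
           * pochhammer (of_int (m i) - of_nat (k - v i) + 1) (k - v i))"
      by (simp add: higher_deriv_power_int)
  qed
  finally show ?thesis .
qed

lemma Astar_expansion:
  assumes "propR \<alpha>" and "x \<noteq> 0"
  shows "Astar \<alpha> n m x = (\<Sum>v=0..n. (-1) ^ n * (of_nat (n choose v) * \<alpha> (n - v))
           * ((x - 1) ^ v * x powi (m - int v)))"
proof -
  have "appellA \<alpha> n (inverse x) = (-1) ^ n * appellA \<alpha> n (1 - inverse x)"
    using assms(1) unfolding propR_def by (metis minus_one_mult_self mult_1 mult.assoc)
  then have "Astar \<alpha> n m x = (\<Sum>v=0..n. (-1) ^ n * (of_nat (n choose v) * \<alpha> (n - v))
           * (x powi m * (1 - inverse x) ^ v))"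
    unfolding Astar_def appellA_def by (simp add: sum_distrib_left mult_ac)
  also have "\<dots> = (\<Sum>v=0..n. (-1) ^ n * (of_nat (n choose v) * \<alpha> (n - v))
           * ((x - 1) ^ v * x powi (m - int v)))"
    using assms(2) by (intro sum.cong refl) (simp add: field_simps power_int_diff)
  finally show ?thesis .
qed

(* The k-th derivative at 1 of (x - 1)^v x^(2k-v), by the Leibniz rule. *)
definition aCoef_weight :: "nat \<Rightarrow> nat \<Rightarrow> nat" where
  "aCoef_weight k v = (k choose v) * fact v * pochhammer (k + 1) (k - v)"

lemma aCoef_weight_eq_0: "k < v \<Longrightarrow> aCoef_weight k v = 0"
  by (simp add: aCoef_weight_def)

lemma aCoef_weight_mult_fact:
  assumes "v \<le> k"
  shows "aCoef_weight k v * fact (k - v) = fact (2 * k - v)"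
proof -
  have "fact (2 * k - v) = fact (k + (k - v))"
    using assms by (simp add: mult_2)
  also have "\<dots> = (fact k * pochhammer (k + 1) (k - v) :: nat)"
    by (simp add: pochhammer_fact pochhammer_product' add.commute)
  also have "fact k = (k choose v) * fact v * fact (k - v)"
    using binomial_fact_lemma[OF assms] by (simp add: mult_ac)
  finally show ?thesis
    by (simp add: aCoef_weight_def mult_ac)
qed

lemma aCoef_weight_eq_binomial:
  assumes "v \<le> k"
  shows "aCoef_weight k v = fact k * ((2 * k - v) choose k)"
proof -
  have "fact k * ((2 * k - v) choose k) * fact (k - v) = fact (2 * k - v)"
    using binomial_fact_lemma[of k "2 * k - v"] assms by (simp add: mult_2 mult_ac)
  with aCoef_weight_mult_fact[OF assms] show ?thesis
    by (metis fact_nonzero mult_cancel_right)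
qed

lemma aCoef_weight_rec_arith:
  fixes k t v :: nat
  assumes "v + t = k + 2"
  shows "(k + t + 2) * (k + t + 1) = (4 * k + 6) * t + v * (v - 1)"
proof (cases "2 \<le> v")
  case True
  define u where "u = v - 2"
  have "v = u + 2" "k = t + u"
    using True assms by (auto simp: u_def)
  then show ?thesis
    by (simp add: algebra_simps)
next
  case False
  then have "v = 0 \<and> t = k + 2 \<or> v = 1 \<and> t = k + 1"
    using assms by auto
  then show ?thesis
    by (auto simp: algebra_simps)
qed

lemma aCoef_weight_rec:
  "aCoef_weight (k + 2) v = (4 * k + 6) * aCoef_weight (k + 1) v + v * (v - 1) * aCoef_weight k (v - 2)"
proof (cases "v \<le> k + 2")
  case True
  \<comment> \<open>multiplying by \<open>fact t\<close> clears all denominators of the weights\<close>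
  define t where "t = k + 2 - v"
  have "aCoef_weight (k + 2) v * fact t = fact (2 * (k + 2) - v)"
    unfolding t_def by (rule aCoef_weight_mult_fact[OF True])
  also have "2 * (k + 2) - v = k + t + 2"
    using True by (simp add: t_def)
  also have "fact (k + t + 2) = (k + t + 2) * (k + t + 1) * fact (k + t)"
    by (simp add: numeral_2_eq_2 algebra_simps)
  also have "(k + t + 2) * (k + t + 1) = (4 * k + 6) * t + v * (v - 1)"
    using True unfolding t_def by (intro aCoef_weight_rec_arith) simp
  also have "((4 * k + 6) * t + v * (v - 1)) * fact (k + t)
      = ((4 * k + 6) * aCoef_weight (k + 1) v + v * (v - 1) * aCoef_weight k (v - 2)) * fact t"
  proof -
    have "aCoef_weight (k + 1) v * fact t = t * fact (k + t)"
    proof (cases "v = k + 2")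
      case False
      then have v: "v \<le> k + 1" and "fact t = t * fact (k + 1 - v)" and "2 * (k + 1) - v = k + t"
        using True by (auto simp: t_def Suc_diff_le)
      then show ?thesis
        using aCoef_weight_mult_fact[OF v] by (simp add: mult.left_commute)
    qed (simp add: t_def aCoef_weight_eq_0)
    moreover have "v * (v - 1) * aCoef_weight k (v - 2) * fact t = v * (v - 1) * fact (k + t)"
    proof (cases "2 \<le> v")
      case True
      then have v: "v - 2 \<le> k" and "k - (v - 2) = t" and "2 * k - (v - 2) = k + t"
        using \<open>v \<le> k + 2\<close> by (auto simp: t_def)
      then show ?thesis
        using aCoef_weight_mult_fact[OF v] by (simp add: mult.assoc)
    qed (cases v; simp)
    ultimately show ?thesis
      by (simp only: distrib_right mult.assoc)
  qed
  finally show ?thesis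
    by simp
qed (simp add: aCoef_weight_eq_0)

lemma aCoef_eq_weighted_sum:
  assumes "propR \<alpha>"
  shows "aCoef \<alpha> n k = (-1) ^ n * (\<Sum>v=0..n. of_nat (aCoef_weight k v) * (of_nat (n choose v) * \<alpha> (n - v)))"
proof -
  have "\<forall>\<^sub>F x in nhds 1. Astar \<alpha> n (2 * int k) x = (\<Sum>v=0..n. (-1) ^ n * (of_nat (n choose v) * \<alpha> (n - v))
          * ((x - 1) ^ v * x powi (2 * int k - int v)))"
    by (rule eventually_mono[OF t1_space_nhds[of 1 0]]) (simp_all add: Astar_expansion[OF assms])
  then have "aCoef \<alpha> n k = (\<Sum>v=0..n. (-1) ^ n * (of_nat (n choose v) * \<alpha> (n - v)) * (of_nat (k choose v)
          * fact v * pochhammer (of_int (2 * int k - int v) - of_nat (k - v) + 1) (k - v)))"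
    unfolding aCoef_def by (rule higher_deriv_at_1_power_powi_sum) simp
  also have "\<dots> = (-1) ^ n * (\<Sum>v=0..n. of_nat (aCoef_weight k v) * (of_nat (n choose v) * \<alpha> (n - v)))"
    unfolding sum_distrib_left
  proof (intro sum.cong refl)
    fix v
    have "of_nat (k choose v) * fact v * pochhammer (of_int (2 * int k - int v) - of_nat (k - v) + 1) (k - v)
        = (of_nat (aCoef_weight k v) :: complex)"
    proof (cases "v \<le> k")
      case True
      have arg: "of_int (2 * int k - int v) - of_nat (k - v) + 1 = (of_nat (k + 1) :: complex)"
        using True by simp
      show ?thesis
        by (simp only: arg pochhammer_of_nat) (simp add: aCoef_weight_def)
    qed (simp add: aCoef_weight_def)
    then show "(-1) ^ n * (of_nat (n choose v) * \<alpha> (n - v)) * (of_nat (k choose v) * fact v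
          * pochhammer (of_int (2 * int k - int v) - of_nat (k - v) + 1) (k - v))
        = (-1) ^ n * (of_nat (aCoef_weight k v) * (of_nat (n choose v) * \<alpha> (n - v)))"
      by (simp only: mult_ac)
  qed
  finally show ?thesis .
qed

lemma aCoef_closed_form:
  assumes "propR \<alpha>" and "k \<le> n"
  shows "aCoef \<alpha> n k = (-1) ^ n * fact k *
           (\<Sum>\<nu>=0..k. of_nat ((2 * k - \<nu>) choose k) * of_nat (n choose \<nu>) * \<alpha> (n - \<nu>))"
proof -
  have "(\<Sum>v=0..n. of_nat (aCoef_weight k v) * (of_nat (n choose v) * \<alpha> (n - v)))
      = (\<Sum>v=0..k. of_nat (aCoef_weight k v) * (of_nat (n choose v) * \<alpha> (n - v)))"
    using assms(2) by (intro sum.mono_neutral_right) (auto simp: aCoef_weight_eq_0)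
  also have "\<dots> = fact k * (\<Sum>\<nu>=0..k. of_nat ((2 * k - \<nu>) choose k) * of_nat (n choose \<nu>) * \<alpha> (n - \<nu>))"
    unfolding sum_distrib_left by (intro sum.cong refl) (simp add: aCoef_weight_eq_binomial mult_ac)
  finally show ?thesis
    by (simp add: aCoef_eq_weighted_sum[OF assms(1)] mult.assoc)
qed

lemma times_binomial_diff_2:
  assumes "2 \<le> n"
  shows "n * (n - 1) * ((n - 2) choose u) = (u + 2) * (u + 1) * (n choose (u + 2))"
proof -
  obtain m where n: "n = Suc (Suc m)"
    using assms by (metis add_2_eq_Suc le_Suc_ex)
  have "n - 1 = Suc m" "n - 2 = m"
    using n by simp_all
  then have "n * (n - 1) * ((n - 2) choose u) = Suc (Suc m) * (Suc m * (m choose u))"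
    by (simp only: n mult.assoc)
  also have "\<dots> = (Suc (Suc m) choose Suc (Suc u)) * Suc (Suc u) * Suc u"
    by (simp only: Suc_times_binomial_eq mult.assoc[symmetric])
  finally show ?thesis
    by (simp only: n add_2_eq_Suc' Suc_eq_plus1[symmetric] mult_ac)
qed

lemma aCoef_rec:
  assumes R: "propR \<alpha>" and "2 \<le> n"
  shows "aCoef \<alpha> n (k + 2) = (4 * of_nat k + 6) * aCoef \<alpha> n (k + 1) + of_nat (n * (n - 1)) * aCoef \<alpha> (n - 2) k"
proof -
  define c where "c v = of_nat (n choose v) * \<alpha> (n - v)" for v
  define b where "b v = of_nat (v * (v - 1) * aCoef_weight k (v - 2)) * c v" for v
  have shift: "of_nat (n * (n - 1)) * (of_nat ((n - 2) choose u) * \<alpha> (n - 2 - u))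
      = of_nat ((u + 2) * (u + 1)) * c (u + 2)" for u
  proof -
    have "of_nat (n * (n - 1)) * (of_nat ((n - 2) choose u) * \<alpha> (n - 2 - u))
        = of_nat (n * (n - 1) * ((n - 2) choose u)) * \<alpha> (n - (u + 2))"
      by (simp add: add.commute mult.assoc)
    then show ?thesis
      unfolding times_binomial_diff_2[OF assms(2)] c_def by (simp only: of_nat_mult mult_ac)
  qed
  have "(-1) ^ (n - 2) = ((-1) ^ n :: complex)"
    using assms(2) by (metis le_add_diff_inverse2 power_add power2_minus power_one mult_1_right)
  then have "of_nat (n * (n - 1)) * aCoef \<alpha> (n - 2) k = (-1) ^ n * (\<Sum>u=0..n-2.
      of_nat (aCoef_weight k u) * (of_nat (n * (n - 1)) * (of_nat ((n - 2) choose u) * \<alpha> (n - 2 - u))))"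
    by (simp add: aCoef_eq_weighted_sum[OF R] sum_distrib_left mult_ac)
  also have "(\<Sum>u=0..n-2. of_nat (aCoef_weight k u)
      * (of_nat (n * (n - 1)) * (of_nat ((n - 2) choose u) * \<alpha> (n - 2 - u)))) = (\<Sum>u=0..n-2. b (u + 2))"
    unfolding shift b_def by (simp add: algebra_simps)
  also have "\<dots> = (\<Sum>v=2..n. b v)"
  proof -
    have "{2..n} = {0 + 2..(n - 2) + 2}"
      using assms(2) by simp
    then show ?thesis
      by (simp only: sum.shift_bounds_cl_nat_ivl)
  qed
  also have "\<dots> = (\<Sum>v=0..n. b v)"
    by (intro sum.mono_neutral_left) (auto simp: b_def)
  finally have lower: "of_nat (n * (n - 1)) * aCoef \<alpha> (n - 2) k = (-1) ^ n * (\<Sum>v=0..n. b v)" .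
  have "aCoef \<alpha> n (k + 2)
      = (-1) ^ n * (\<Sum>v=0..n. (4 * of_nat k + 6) * (of_nat (aCoef_weight (k + 1) v) * c v) + b v)"
    unfolding aCoef_eq_weighted_sum[OF R] c_def[symmetric] aCoef_weight_rec b_def
    by (simp only: of_nat_add distrib_right of_nat_mult[of "4 * k + 6"]) (simp add: mult.assoc)
  also have "\<dots> = (4 * of_nat k + 6) * aCoef \<alpha> n (k + 1) + (-1) ^ n * (\<Sum>v=0..n. b v)"
    by (simp add: aCoef_eq_weighted_sum[OF R] c_def sum.distrib sum_distrib_left algebra_simps)
  finally show ?thesis
    by (simp only: lower)
qed

lemma dvd_poly_of_roots_0_1:
  fixes p :: "'a::idom poly"
  assumes "poly p 0 = 0" and "poly p 1 = 0"
  shows "[:0, -1, 1:] dvd p"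
proof -
  have "[:-0, 1:] dvd p"
    using assms(1) by (simp only: poly_eq_0_iff_dvd)
  then obtain r where r: "p = [:0, 1:] * r"
    by auto
  then have "poly r 1 = 0"
    using assms(2) by simp
  then have "[:-1, 1:] dvd r"
    by (simp only: poly_eq_0_iff_dvd)
  then obtain r' where r': "r = [:-1, 1:] * r'"
    by auto
  have "[:0, 1:] * [:-1, 1:] = ([:0, -1, 1:] :: 'a poly)"
    by simp
  then show ?thesis
    unfolding r r' by (metis dvd_triv_left mult.assoc)
qed

lemma reflection_invariant_poly_eq_pcompose:
  fixes p :: "'a::idom poly"
  assumes "pcompose p [:1, -1:] = p"
  shows "\<exists>q. p = pcompose q [:0, -1, 1:]"
  using assms
proof (induction "degree p" arbitrary: p rule: less_induct)
  case less
  define s :: "'a poly" where "s = [:0, -1, 1:]"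
  have s_reflect: "pcompose s [:1, -1:] = s"
    by (simp add: s_def pcompose_pCons)
  have s_nz: "s \<noteq> 0" and deg_s: "degree s = 2"
    by (simp_all add: s_def)
  define c where "c = poly p 0"
  show ?case
  proof (cases "p = [:c:]")
    case True
    then show ?thesis
      by (metis pcompose_const)
  next
    case False
    have "poly (pcompose p [:1, -1:]) 0 = poly p 1"
      by (simp add: poly_pcompose)
    then have "poly (p - [:c:]) 0 = 0" "poly (p - [:c:]) 1 = 0"
      using less.prems by (simp_all add: c_def)
    then have "s dvd p - [:c:]"
      unfolding s_def by (rule dvd_poly_of_roots_0_1)
    then obtain r where r: "p - [:c:] = s * r"
      by auto
    have "s * pcompose r [:1, -1:] = pcompose (s * r) [:1, -1:]"
      by (simp add: pcompose_mult s_reflect)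
    also have "\<dots> = s * r"
      unfolding r[symmetric] pcompose_diff less.prems by simp
    finally have "s * pcompose r [:1, -1:] = s * r" .
    then have r_reflect: "pcompose r [:1, -1:] = r"
      using s_nz by (metis mult_left_cancel)
    have "r \<noteq> 0"
      using False r by auto
    have "degree (p - [:c:]) = 2 + degree r"
      unfolding r degree_mult_eq[OF s_nz \<open>r \<noteq> 0\<close>] deg_s by (rule refl)
    moreover have "degree (p - [:c:]) \<le> degree p"
      by (rule degree_diff_le) auto
    ultimately obtain q where "r = pcompose q s"
      using less.hyps[OF _ r_reflect] by (auto simp: s_def)
    then have "p = pcompose (pCons c q) s"
      using r by (simp add: pcompose_pCons algebra_simps)
    then show ?thesis
      by (auto simp: s_def)
  qed
qed

lemma reflection_antiinvariant_poly_eq_pcompose: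
  fixes p :: "'a::field_char_0 poly"
  assumes "pcompose p [:1, -1:] = - p"
  shows "\<exists>q. p = [:-1, 2:] * pcompose q [:0, -1, 1:]"
proof -
  have "poly p (1 / 2) = - poly p (1 / 2)"
    using arg_cong[OF assms, of "\<lambda>p. poly p (1 / 2)"] by (simp add: poly_pcompose)
  then have "[:- (1 / 2), 1:] dvd p"
    by (simp add: poly_eq_0_iff_dvd[symmetric])
  then obtain r0 where "p = [:- (1 / 2), 1:] * r0"
    by auto
  define r where "r = smult (1 / 2) r0"
  have p: "p = [:-1, 2:] * r"
    unfolding r_def \<open>p = _\<close> by (simp add: poly_eq_poly_eq_iff[symmetric] fun_eq_iff algebra_simps)
  have "pcompose [:-1, 2:] [:1, -1:] = - [:-1, 2 :: 'a:]"
    by (simp add: pcompose_pCons)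
  then have "- ([:-1, 2:] * pcompose r [:1, -1:]) = - ([:-1, 2:] * r)"
    using assms unfolding p pcompose_mult by (simp only: minus_mult_left)
  then have "pcompose r [:1, -1:] = r"
    by (metis neg_equal_iff_equal mult_left_cancel pCons_eq_0_iff zero_neq_numeral)
  then show ?thesis
    using reflection_invariant_poly_eq_pcompose p by metis
qed

definition appell_poly :: "(nat \<Rightarrow> complex) \<Rightarrow> nat \<Rightarrow> complex poly" where
  "appell_poly \<alpha> n = (\<Sum>\<nu>=0..n. monom (of_nat (n choose \<nu>) * \<alpha> (n - \<nu>)) \<nu>)"

lemma poly_appell_poly: "poly (appell_poly \<alpha> n) x = appellA \<alpha> n x"
  unfolding appell_poly_def appellA_def by (simp add: poly_sum poly_monom)

lemma degree_appell_poly: "degree (appell_poly \<alpha> n) \<le> n"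
  unfolding appell_poly_def by (rule degree_sum_le) (auto intro: order.trans[OF degree_monom_le])

lemma odd_appell_factorization:
  assumes "propR \<alpha>" and "odd n"
  shows "\<exists>q. degree q \<le> n div 2 \<and> (\<forall>x. appellA \<alpha> n x = (2 * x - 1) * poly q (x * (x - 1)))"
proof -
  have "pcompose (appell_poly \<alpha> n) [:1, -1:] = - appell_poly \<alpha> n"
    using assms by (simp add: poly_eq_poly_eq_iff[symmetric] fun_eq_iff poly_pcompose poly_appell_poly propR_def)
  then obtain q where q: "appell_poly \<alpha> n = [:-1, 2:] * pcompose q [:0, -1, 1:]"
    using reflection_antiinvariant_poly_eq_pcompose by blast
  have "degree q \<le> n div 2"
  proof (cases "q = 0")
    case False
    then have "pcompose q [:0, -1, 1:] \<noteq> 0"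
      by (simp add: pcompose_eq_0_iff)
    then have "degree (appell_poly \<alpha> n) = 1 + degree q * 2"
      unfolding q by (subst degree_mult_eq) (simp_all add: degree_pcompose)
    with degree_appell_poly[of \<alpha> n] show ?thesis
      by linarith
  qed simp
  moreover have "appellA \<alpha> n x = (2 * x - 1) * poly q (x * (x - 1))" for x
    using arg_cong[OF q, of "\<lambda>p. poly p x"] by (simp add: poly_appell_poly poly_pcompose algebra_simps)
  ultimately show ?thesis
    by blast
qed

lemma Fpoly_eqI:
  assumes "odd n" and "degree q \<le> n div 2"
    and "\<And>x. appellA \<alpha> n x = (2 * x - 1) * poly q (x * (x - 1))"
  shows "Fpoly \<alpha> n = q"
  unfolding Fpoly_def
proof (rule the_equality)
  show "degree q \<le> n div 2 \<and> (\<forall>x. appellA \<alpha> n x = (2 * x - 1) ^ delta n * poly q (x * (x - 1)))"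
    using assms by (simp add: delta_def)
next
  fix p
  assume "degree p \<le> n div 2 \<and> (\<forall>x. appellA \<alpha> n x = (2 * x - 1) ^ delta n * poly p (x * (x - 1)))"
  then have "poly ([:-1, 2:] * pcompose p [:0, -1, 1:]) x = poly ([:-1, 2:] * pcompose q [:0, -1, 1:]) x" for x
    using assms by (simp add: delta_def poly_pcompose algebra_simps)
  then have "[:-1, 2:] * pcompose p [:0, -1, 1:] = [:-1, 2:] * pcompose q [:0, -1, 1:]"
    by (simp add: poly_eq_poly_eq_iff[symmetric] fun_eq_iff)
  then have "pcompose (p - q) [:0, -1, 1:] = 0"
    unfolding pcompose_diff by (metis mult_left_cancel pCons_eq_0_iff zero_neq_numeral right_minus_eq)
  then show "p = q"
    using pcompose_eq_0[of "p - q" "[:0, -1, 1:]"] by simp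
qed

lemma powi_reflection_term:
  fixes x :: complex
  assumes x: "x \<noteq> 0"
  shows "x powi (2 * int k) * ((2 * inverse x - 1) * (inverse x * (inverse x - 1)) ^ j)
     = (-1) ^ j * (x - 1) ^ j * (2 * x powi (2 * int k - 2 * int j - 1) - x powi (2 * int k - 2 * int j))"
proof -
  have "inverse x * (inverse x - 1) = - (x - 1) * inverse x ^ 2"
    using x by (simp add: field_simps power2_eq_square)
  then have factor: "(inverse x * (inverse x - 1)) ^ j = (-1) ^ j * (x - 1) ^ j * inverse x ^ (2 * j)"
    by (simp add: power_mult_distrib power_mult[symmetric] mult.commute[of 2] flip: power_minus)
  have powers: "x powi (2 * int k) * (2 * inverse x - 1) * inverse x ^ (2 * j)
      = 2 * x powi (2 * int k - 2 * int j - 1) - x powi (2 * int k - 2 * int j)"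
  proof -
    have "x powi (2 * int k) = x powi (2 * int k - 2 * int j - 1) * x ^ (2 * j + 1)"
      "x powi (2 * int k - 2 * int j) = x powi (2 * int k - 2 * int j - 1) * x"
      using x power_int_minus_mult[of x "2 * int k - 2 * int j"]
      by (simp_all flip: power_int_add power_int_of_nat)
    then show ?thesis
      using x by (simp add: field_simps)
  qed
  have "x powi (2 * int k) * ((2 * inverse x - 1) * (inverse x * (inverse x - 1)) ^ j)
      = (-1) ^ j * (x - 1) ^ j * (x powi (2 * int k) * (2 * inverse x - 1) * inverse x ^ (2 * j))"
    unfolding factor by (simp only: mult_ac)
  then show ?thesis
    unfolding powers .
qed

lemma pochhammer_diag_shift:
  assumes "0 < m"
  shows "pochhammer (of_nat m + 1) m = 2 * pochhammer (of_nat m :: 'a::field_char_0) m"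
proof -
  have nz: "(of_nat m :: 'a) \<noteq> 0"
    using assms by simp
  have "of_nat m * pochhammer (of_nat m + 1) m = pochhammer (of_nat m :: 'a) (Suc m)"
    by (simp only: pochhammer_rec)
  also have "\<dots> = of_nat m * (2 * pochhammer (of_nat m) m)"
    by (simp add: pochhammer_Suc algebra_simps)
  finally show ?thesis
    by (simp only: mult_left_cancel[OF nz])
qed

lemma reflection_weight_eq_delta:
  "of_nat (k choose j) * fact j * (2 * pochhammer (of_nat (k - j)) (k - j) - pochhammer (of_nat (k - j) + 1) (k - j))
    = (if j = k then fact k else (0 :: 'a::field_char_0))"
proof (cases "j < k")
  case True
  then show ?thesis
    using pochhammer_diag_shift[of "k - j", where 'a='a] by simp
qed (auto simp: binomial_eq_0)

lemma aCoef_eq_coeff: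
  assumes rep: "\<And>x. appellA \<alpha> n x = (2 * x - 1) * poly q (x * (x - 1))"
  shows "aCoef \<alpha> n k = (-1) ^ k * fact k * coeff q k"
proof -
  define N where "N = degree q"
  \<comment> \<open>index \<open>(j, e)\<close>: the two terms \<open>2 (x - 1)^j x^(2k-2j-1)\<close> and \<open>-(x - 1)^j x^(2k-2j)\<close>\<close>
  define I where "I = {..N} \<times> {0, 1 :: nat}"
  define c :: "nat \<times> nat \<Rightarrow> complex" where "c = (\<lambda>(j, e). coeff q j * (-1) ^ j * (if e = 0 then 2 else -1))"
  define m :: "nat \<times> nat \<Rightarrow> int" where "m = (\<lambda>(j, e). 2 * int k - 2 * int j - 1 + int e)"
  have expand: "Astar \<alpha> n (2 * int k) x = (\<Sum>i\<in>I. c i * ((x - 1) ^ fst i * x powi m i))" if "x \<noteq> 0" for x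
  proof -
    have "Astar \<alpha> n (2 * int k) x
        = (\<Sum>j\<le>N. coeff q j * (x powi (2 * int k) * ((2 * inverse x - 1) * (inverse x * (inverse x - 1)) ^ j)))"
      unfolding Astar_def rep poly_altdef N_def by (simp add: sum_distrib_left mult_ac)
    also have "\<dots> = (\<Sum>i\<in>I. c i * ((x - 1) ^ fst i * x powi m i))"
      unfolding powi_reflection_term[OF that] I_def sum.cartesian_product'
      by (simp add: c_def m_def algebra_simps)
    finally show ?thesis .
  qed
  have "\<forall>\<^sub>F x in nhds 1. Astar \<alpha> n (2 * int k) x = (\<Sum>i\<in>I. c i * ((x - 1) ^ fst i * x powi m i))"
    by (rule eventually_mono[OF t1_space_nhds[of 1 0]]) (simp_all add: expand)
  then have "aCoef \<alpha> n k = (\<Sum>i\<in>I. c i * (of_nat (k choose fst i) * fact (fst i)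
      * pochhammer (of_int (m i) - of_nat (k - fst i) + 1) (k - fst i)))"
    unfolding aCoef_def
    by (rule higher_deriv_at_1_power_powi_sum) (simp add: I_def)
  also have "\<dots> = (\<Sum>j\<le>N. coeff q j * (-1) ^ j * (of_nat (k choose j) * fact j
      * (2 * pochhammer (of_nat (k - j)) (k - j) - pochhammer (of_nat (k - j) + 1) (k - j))))"
  proof -
    have "pochhammer (of_int (m (j, e)) - of_nat (k - j) + 1) (k - j)
        = pochhammer (of_nat (k - j) + of_nat e :: complex) (k - j)" for j e
      by (cases "j \<le> k") (simp_all add: m_def algebra_simps)
    then show ?thesis
      unfolding I_def sum.cartesian_product' by (simp add: c_def algebra_simps)
  qed
  also have "\<dots> = (\<Sum>j\<le>N. if j = k then (-1) ^ k * fact k * coeff q k else 0)"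
    by (intro sum.cong refl) (simp add: reflection_weight_eq_delta)
  also have "\<dots> = (-1) ^ k * fact k * coeff q k"
    by (cases "k \<le> N") (auto simp: N_def coeff_eq_0)
  finally show ?thesis .
qed

theorem mainTheorem16:
  fixes \<alpha> :: "nat \<Rightarrow> complex"
  assumes R: "propR \<alpha>"
  shows "(\<forall>n k. k \<le> n \<longrightarrow>
            aCoef \<alpha> n k = (-1) ^ n * fact k *
              (\<Sum>\<nu>=0..k. of_nat ((2 * k - \<nu>) choose k) * of_nat (n choose \<nu>) * \<alpha> (n - \<nu>)))
       \<and> (\<forall>n k. 2 \<le> n \<and> k \<le> n - 2 \<longrightarrow>
            aCoef \<alpha> n (k + 2) = (4 * of_nat k + 6) * aCoef \<alpha> n (k + 1)
              + of_nat (n * (n - 1)) * aCoef \<alpha> (n - 2) k)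
       \<and> (\<forall>n. odd n \<longrightarrow>
            (\<forall>x. appellA \<alpha> n x = (2 * x - 1) * poly (Fpoly \<alpha> n) (x * (x - 1)))
            \<and> (\<forall>k \<le> n div 2. fhat \<alpha> n k = (-1) ^ k * aCoef \<alpha> n k))"
proof -
  have "(\<forall>x. appellA \<alpha> n x = (2 * x - 1) * poly (Fpoly \<alpha> n) (x * (x - 1)))
      \<and> (\<forall>k. fhat \<alpha> n k = (-1) ^ k * aCoef \<alpha> n k)" if "odd n" for n
  proof -
    obtain q where q: "degree q \<le> n div 2" "\<And>x. appellA \<alpha> n x = (2 * x - 1) * poly q (x * (x - 1))"
      using odd_appell_factorization[OF R \<open>odd n\<close>] by blast
    then have F: "Fpoly \<alpha> n = q"
      using Fpoly_eqI[OF \<open>odd n\<close>] by blast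
    have "fhat \<alpha> n k = (-1) ^ k * aCoef \<alpha> n k" for k
      by (simp add: fhat_def F aCoef_eq_coeff[OF q(2)] flip: power_add mult.assoc)
    with q(2) show ?thesis
      by (simp add: F)
  qed
  then show ?thesis
    using aCoef_closed_form[OF R] aCoef_rec[OF R] by blast
qed

end
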